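(* Let $f:\mathbb{R}^d\to\mathbb{R}^d$ be smooth with all derivatives uniformly bounded, let $n\ge 3$, and for each step size $h>0$ (in some range $0<h\le h_0$) let $q:[0,h]\to\mathbb{R}^d$ be a smooth solution of $\ddot q(t)=f(q(t))$ and let $q_d$ be a prolongation-collocation Hermite polynomial of degree $2n-1$ for $q$ on $[0,h]$ (as defined in the context), with $\dot q$ and $\dot q_d(\tau)$, $\tau\in\{0,h\}$, bounded uniformly in $h$. Suppose that for some $p>0$ and for $\tau\in\{0,h\}$ one has $\dot q_d(\tau)=\dot q(\tau)+\mathcal{O}(h^p)$ as $h\to 0$. Then for $\tau\in\{0,h\}$, $$q_d^{(j)}(\tau)=q^{(j)}(\tau)+\mathcal{O}(h^p),\qquad j=3,\dots,n.$$
   Context: Setting: configuration space $Q=\mathbb{R}^d$, separable Lagrangian $L(q,\dot q)=\tfrac12 m|\dot q|^2-V(q)$, whose Euler--Lagrange equation is the second-order ODE $\ddot q=f(q)$ with $f=-\nabla V/m$. Given a solution $q$ of this ODE on $[0,h]$, a prolongation-collocation Hermite polynomial of degree $2n-1$ for $q$ on $[0,h]$ is a polynomial $q_d:[0,h]\to\mathbb{R}^d$ of degree at most $2n-1$ satisfying the boundary conditions $q_d(0)=q(0)$, $q_d(h)=q(h)$ and the collocation conditions, for $\tau\in\{0,h\}$ and $j=2,\dots,n$, $$q_d^{(j)}(\tau)=\frac{d^{j-2}}{dt^{j-2}}f(q_d(t))\Big|_{t=\tau},$$ i.e. $q_d$ satisfies the equation $\ddot q=f(q)$ and its first $n-2$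 time-derivatives (prolongations) $q^{(3)}=f'(q)\dot q$, etc., at the endpoints $t=0$ and $t=h$. Such a polynomial is written in two-point Hermite form $q_d(t)=\sum_{j=0}^{n-1}\big(q_d^{(j)}(0)H_{n,j}(t)+(-1)^j q_d^{(j)}(h)H_{n,j}(h-t)\big)$ with $H_{n,j}(t)=\frac{t^j}{j!}(1-t/h)^n\sum_{s=0}^{n-j-1}\binom{n+s-1}{s}(t/h)^s$. The $\mathcal{O}(\cdot)$ symbols are as $h\to0$ with constants independent of $h$. *)

theory Defs
  imports "HOL-Analysis.Analysis" "HOL-Library.Landau_Symbols"
begin

text \<open>j-th derivative of a curve g on the set S (one-sided at endpoints of an interval).\<close>
fun hvd :: "nat \<Rightarrow> (real \<Rightarrow> 'a::real_normed_vector) \<Rightarrow> real set \<Rightarrow> real \<Rightarrow> 'a" where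
  "hvd 0 g S = g"
| "hvd (Suc j) g S = (\<lambda>t. vector_derivative (hvd j g S) (at t within S))"

definition smooth_curve_on :: "(real \<Rightarrow> 'a::real_normed_vector) \<Rightarrow> real set \<Rightarrow> bool" where
  "smooth_curve_on g S \<longleftrightarrow>
     (\<forall>j. \<forall>t\<in>S. (hvd j g S has_vector_derivative hvd (Suc j) g S t) (at t within S))"

text \<open>f : R^d \<rightarrow> R^d smooth with all derivatives (orders 0,1,2,...) uniformly bounded.
  Df k x [v1,...,vk] is the k-th Frechet derivative of f at x applied to v1,...,vk.\<close>
definition smooth_bounded_derivs :: "('a::euclidean_space \<Rightarrow> 'a) \<Rightarrow> bool" where
  "smooth_bounded_derivs f \<longleftrightarrow>
     (\<exists>Df :: nat \<Rightarrow> 'a \<Rightarrow> 'a list \<Rightarrow> 'a.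
        (\<forall>x. Df 0 x [] = f x) \<and>
        (\<forall>k x vs. length vs = k \<longrightarrow>
            ((\<lambda>y. Df k y vs) has_derivative (\<lambda>w. Df (Suc k) x (w # vs))) (at x)) \<and>
        (\<forall>k. \<exists>M. \<forall>x vs. length vs = k \<longrightarrow> norm (Df k x vs) \<le> M * (\<Prod>v\<leftarrow>vs. norm v)))"

definition PC_Hermite ::
  "('a::euclidean_space \<Rightarrow> 'a) \<Rightarrow> nat \<Rightarrow> real \<Rightarrow> (real \<Rightarrow> 'a) \<Rightarrow> (real \<Rightarrow> 'a) \<Rightarrow> bool" where
  "PC_Hermite f n h q qd \<longleftrightarrow>
     (\<exists>c :: nat \<Rightarrow> 'a. \<forall>t. qd t = (\<Sum>i\<le>2*n-1. t ^ i *\<^sub>R c i)) \<and>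
     qd 0 = q 0 \<and> qd h = q h \<and>
     (\<forall>\<tau>\<in>{0, h}. \<forall>j\<in>{2..n}.
        hvd j qd {0..h} \<tau> = hvd (j - 2) (\<lambda>t. f (qd t)) {0..h} \<tau>)"

end

theory Submission
  imports Defs
begin

(*
  Write Df k x [v1,...,vk] for the k-th derivative of f at x.  For every smooth curve g,
  the k-th derivative of f(g(t)) is a Faa di Bruno sum of terms Df |as| (g t) [g^(a)(t) | a <- as]
  over a fixed list of index lists as (fdb_index k, independent of g, indices in {1..k}).
  The exact solution satisfies q^(k+2) = (f o q)^(k) on [0,h]; by collocation the polynomial
  qd satisfies the same identity at tau in {0,h} for k+2 <= n, and qd(tau) = q(tau).  As each
  Df m is multilinear and bounded, a Faa di Bruno sum changes by O(e) when its bounded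
  arguments change by O(e); induction on the order propagates the O(h^p) error of the first
  derivative to all orders <= n, with constants independent of h.
*)

lemma has_vector_derivative_iff_quotient:
  fixes H :: "real \<Rightarrow> 'b::real_normed_vector"
  shows "(H has_vector_derivative L) (at t within S) \<longleftrightarrow>
         ((\<lambda>s. (1 / (s - t)) *\<^sub>R (H s - H t)) \<longlongrightarrow> L) (at t within S)"
proof -
  have quotient_eq: "norm ((1 / norm (s - t)) *\<^sub>R (H s - (H t + (s - t) *\<^sub>R L)))
      = norm ((1 / (s - t)) *\<^sub>R (H s - H t) - L)" if "s \<noteq> t" for s
  proof -
    have "(1 / (s - t)) *\<^sub>R ((s - t) *\<^sub>R L) = L" using that by simp
    then have "(1 / (s - t)) *\<^sub>R (H s - H t) - L = (1 / (s - t)) *\<^sub>R (H s - (H t + (s - t) *\<^sub>R L))"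
      by (simp add: algebra_simps)
    then show ?thesis by simp
  qed
  have "(H has_vector_derivative L) (at t within S) \<longleftrightarrow>
    ((\<lambda>s. norm ((1 / norm (s - t)) *\<^sub>R (H s - (H t + (s - t) *\<^sub>R L)))) \<longlongrightarrow> 0) (at t within S)"
    unfolding has_vector_derivative_def has_derivative_within tendsto_norm_zero_iff
    using bounded_linear_scaleR_left[of L] by simp
  also have "\<dots> \<longleftrightarrow> ((\<lambda>s. norm ((1 / (s - t)) *\<^sub>R (H s - H t) - L)) \<longlongrightarrow> 0) (at t within S)"
    using quotient_eq by (intro tendsto_cong) (auto simp: eventually_at_filter)
  also have "\<dots> \<longleftrightarrow> ((\<lambda>s. (1 / (s - t)) *\<^sub>R (H s - H t)) \<longlongrightarrow> L) (at t within S)"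
    by (simp add: tendsto_norm_zero_iff LIM_zero_iff)
  finally show ?thesis .
qed

lemma prod_list_map_upt: "prod_list (map f [0..<i]) = (\<Prod>j<i. f j)"
  by (induction i) (auto simp: lessThan_Suc mult.commute)

lemma sum_list_concat: "sum_list (concat xss) = sum_list (map sum_list xss)"
  by (induction xss) auto

lemma norm_sum_list_le:
  "(\<And>x. x \<in> set xs \<Longrightarrow> norm (f x) \<le> g x) \<Longrightarrow> norm (\<Sum>x\<leftarrow>xs. f x) \<le> (\<Sum>x\<leftarrow>xs. g x)"
  by (induction xs) (auto intro!: norm_triangle_le add_mono)

lemma prod_list_norm_le_power:
  "\<forall>v\<in>set vs. norm v \<le> K \<Longrightarrow> 0 \<le> K \<Longrightarrow> (\<Prod>v\<leftarrow>vs. norm v) \<le> K ^ length vs"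
  by (induction vs) (auto intro!: mult_mono prod_list_nonneg)

lemma has_vector_derivative_sum_list:
  "(\<And>x. x \<in> set xs \<Longrightarrow> (F x has_vector_derivative F' x) net) \<Longrightarrow>
   ((\<lambda>s. \<Sum>x\<leftarrow>xs. F x s) has_vector_derivative (\<Sum>x\<leftarrow>xs. F' x)) net"
  by (induction xs) (auto intro!: has_vector_derivative_add)

lemma hvd_add: "hvd (k + j) g S = hvd k (hvd j g S) S"
  by (induction k) auto

lemma hvd_cong_on: "(\<forall>t\<in>S. u t = w t) \<Longrightarrow> \<forall>t\<in>S. hvd k u S t = hvd k w S t"
proof (induction k)
  case 0
  then show ?case by simp
next
  case (Suc k)
  show ?case
  proof
    fix t assume t: "t \<in> S"
    have "(hvd k u S has_vector_derivative d) (at t within S) \<longleftrightarrow>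
          (hvd k w S has_vector_derivative d) (at t within S)" for d
      using Suc has_vector_derivative_transform[OF t] by metis
    then show "hvd (Suc k) u S t = hvd (Suc k) w S t" by (simp add: vector_derivative_def)
  qed
qed

definition poly_curve :: "(real \<Rightarrow> 'a::real_normed_vector) \<Rightarrow> bool" where
  "poly_curve g \<longleftrightarrow> (\<exists>N c. \<forall>t. g t = (\<Sum>i<N. t ^ i *\<^sub>R c i))"

lemma poly_curve_derivative:
  assumes "poly_curve g"
  shows "\<exists>g'. poly_curve g' \<and> (\<forall>t. (g has_vector_derivative g' t) (at t within S))"
proof -
  obtain N c where g: "g = (\<lambda>t. \<Sum>i<N. t ^ i *\<^sub>R c i)"
    using assms unfolding poly_curve_def by blast
  define g' where "g' t = (\<Sum>i<N. (real i * t ^ (i - 1)) *\<^sub>R c i)" for t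
  have "(g has_vector_derivative g' t) (at t within S)" for t
    unfolding g g'_def by (intro has_vector_derivative_sum) (auto intro!: derivative_eq_intros)
  moreover have "poly_curve g'"
  proof (cases N)
    case 0
    then show ?thesis unfolding poly_curve_def g'_def by (intro exI[of _ 0]) auto
  next
    case (Suc M)
    have "g' t = (\<Sum>i<M. t ^ i *\<^sub>R (real (Suc i) *\<^sub>R c (Suc i)))" for t
      unfolding g'_def Suc sum.lessThan_Suc_shift by (simp add: mult.commute)
    then show ?thesis unfolding poly_curve_def
      by (intro exI[of _ M] exI[of _ "\<lambda>i. real (Suc i) *\<^sub>R c (Suc i)"]) blast
  qed
  ultimately show ?thesis by blast
qed

lemma poly_curve_hvd:
  fixes g :: "real \<Rightarrow> 'a::euclidean_space"
  assumes "poly_curve g" "a < b"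
  shows "\<exists>p. poly_curve p \<and> (\<forall>t\<in>{a..b}. hvd j g {a..b} t = p t)"
proof (induction j)
  case 0
  then show ?case using assms(1) by auto
next
  case (Suc j)
  then obtain p where p: "poly_curve p" "\<forall>t\<in>{a..b}. hvd j g {a..b} t = p t" by blast
  obtain p' where p': "poly_curve p'" "\<And>t. (p has_vector_derivative p' t) (at t within {a..b})"
    using poly_curve_derivative[OF p(1)] by blast
  have "(hvd j g {a..b} has_vector_derivative p' t) (at t within {a..b})" if "t \<in> {a..b}" for t
    using has_vector_derivative_transform[OF that _ p'(2)] p(2) by auto
  then have "\<forall>t\<in>{a..b}. hvd (Suc j) g {a..b} t = p' t"
    by (simp add: vector_derivative_within_closed_interval[OF assms(2)])
  then show ?case using p'(1) by blast
qed

lemma poly_curve_smooth: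
  fixes g :: "real \<Rightarrow> 'a::euclidean_space"
  assumes "poly_curve g" "a < b"
  shows "smooth_curve_on g {a..b}"
  unfolding smooth_curve_on_def
proof (intro allI ballI)
  fix j t assume t: "t \<in> {a..b}"
  obtain p where p: "poly_curve p" "\<forall>t\<in>{a..b}. hvd j g {a..b} t = p t"
    using poly_curve_hvd[OF assms] by blast
  obtain p' where p': "\<And>t. (p has_vector_derivative p' t) (at t within {a..b})"
    using poly_curve_derivative[OF p(1)] by blast
  have "(hvd j g {a..b} has_vector_derivative p' t) (at t within {a..b})"
    using has_vector_derivative_transform[OF t _ p'] p(2) by auto
  moreover have "hvd (Suc j) g {a..b} t = p' t"
    using vector_derivative_within_closed_interval[OF assms(2) t calculation] by simp
  ultimately show "(hvd j g {a..b} has_vector_derivative hvd (Suc j) g {a..b} t) (at t within {a..b})"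
    by simp
qed

(* Differentiating the term with index list as
   produces a new first slot with index 1 (chain rule through Df) plus, for each slot i,
   the term with as!i increased by one (product rule). *)
definition fdb_step :: "nat list \<Rightarrow> nat list list" where
  "fdb_step as = (1 # as) # map (\<lambda>i. as[i := Suc (as ! i)]) [0..<length as]"

fun fdb_index :: "nat \<Rightarrow> nat list list" where
  "fdb_index 0 = [[]]"
| "fdb_index (Suc k) = concat (map fdb_step (fdb_index k))"

lemma fdb_index_range: "as \<in> set (fdb_index k) \<Longrightarrow> a \<in> set as \<Longrightarrow> 1 \<le> a \<and> a \<le> k"
proof (induction k arbitrary: as a)
  case 0
  then show ?case by simp
next
  case (Suc k)
  then obtain bs where bs: "bs \<in> set (fdb_index k)" "as \<in> set (fdb_step bs)" by auto
  show ?case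
  proof (cases "as = 1 # bs")
    case True
    then show ?thesis using Suc.IH[OF bs(1)] Suc.prems by fastforce
  next
    case False
    then obtain i where i: "i < length bs" "as = bs[i := Suc (bs ! i)]"
      using bs by (auto simp: fdb_step_def)
    have "a \<in> insert (Suc (bs ! i)) (set bs)"
      using Suc.prems(2) i set_update_subset_insert by fastforce
    moreover have "bs ! i \<le> k" using Suc.IH[OF bs(1), of "bs ! i"] i by auto
    ultimately show ?thesis using Suc.IH[OF bs(1)] by (auto intro: le_SucI)
  qed
qed

locale derivative_tower =
  fixes Df :: "nat \<Rightarrow> 'a::euclidean_space \<Rightarrow> 'a list \<Rightarrow> 'a"
  assumes tower_deriv: "\<And>k x vs. length vs = k \<Longrightarrow>
            ((\<lambda>y. Df k y vs) has_derivative (\<lambda>w. Df (Suc k) x (w # vs))) (at x)"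
    and tower_bounded: "\<And>k. \<exists>M. \<forall>x vs. length vs = k \<longrightarrow> norm (Df k x vs) \<le> M * (\<Prod>v\<leftarrow>vs. norm v)"
begin

(* Each Df m x is linear in every slot: slot 1 because it is a derivative, the others by
   induction, since derivatives of linear families are linear. *)
lemma tower_linear_slot:
  assumes "length xs + Suc (length ys) = m"
  shows "linear (\<lambda>v. Df m x (xs @ v # ys))"
  using assms
proof (induction xs arbitrary: x m)
  case Nil
  then show ?case
    using tower_deriv[of ys "length ys" x] has_derivative_bounded_linear bounded_linear.linear
    by fastforce
next
  case (Cons u xs)
  define k where "k = length xs + Suc (length ys)"
  have m: "m = Suc k" using Cons.prems k_def by simp
  have D: "((\<lambda>y. Df k y (xs @ v # ys)) has_derivative (\<lambda>w. Df m x (w # xs @ v # ys))) (at x)" for v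
    using tower_deriv k_def m by simp
  have IH: "linear (\<lambda>v. Df k y (xs @ v # ys))" for y using Cons.IH k_def by simp
  show ?case
  proof (rule linearI)
    fix a b
    have sum: "(\<lambda>y. Df k y (xs @ (a + b) # ys)) = (\<lambda>y. Df k y (xs @ a # ys) + Df k y (xs @ b # ys))"
      using IH linear_add by fastforce
    have "((\<lambda>y. Df k y (xs @ (a + b) # ys)) has_derivative
       (\<lambda>w. Df m x (w # xs @ a # ys) + Df m x (w # xs @ b # ys))) (at x)"
      unfolding sum by (intro has_derivative_add D)
    from has_derivative_unique[OF D[of "a + b"] this]
    show "Df m x ((u # xs) @ (a + b) # ys) = Df m x ((u # xs) @ a # ys) + Df m x ((u # xs) @ b # ys)"
      by (simp add: fun_eq_iff)
  next
    fix c a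
    have scale: "(\<lambda>y. Df k y (xs @ (c *\<^sub>R a) # ys)) = (\<lambda>y. c *\<^sub>R Df k y (xs @ a # ys))"
      using IH linear_scale by fastforce
    have "((\<lambda>y. Df k y (xs @ (c *\<^sub>R a) # ys)) has_derivative
       (\<lambda>w. c *\<^sub>R Df m x (w # xs @ a # ys))) (at x)"
      unfolding scale by (intro has_derivative_scaleR_right D)
    from has_derivative_unique[OF D[of "c *\<^sub>R a"] this]
    show "Df m x ((u # xs) @ (c *\<^sub>R a) # ys) = c *\<^sub>R Df m x ((u # xs) @ a # ys)"
      by (simp add: fun_eq_iff)
  qed
qed

lemma tower_diff_telescope:
  assumes "length ws = m" "length us = m"
  shows "Df m y ws - Df m y us = (\<Sum>i<m. Df m y (take i ws @ (ws ! i - us ! i) # drop (Suc i) us))"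
proof -
  define mix where "mix i = take i ws @ drop i us" for i
  have step: "Df m y (mix (Suc i)) - Df m y (mix i)
      = Df m y (take i ws @ (ws ! i - us ! i) # drop (Suc i) us)" if "i < m" for i
  proof -
    have a: "mix (Suc i) = take i ws @ ws ! i # drop (Suc i) us"
      using that assms by (simp add: mix_def take_Suc_conv_app_nth Cons_nth_drop_Suc)
    have b: "mix i = take i ws @ us ! i # drop (Suc i) us"
      using that assms by (simp add: mix_def Cons_nth_drop_Suc)
    have L: "linear (\<lambda>v. Df m y (take i ws @ v # drop (Suc i) us))"
      by (rule tower_linear_slot) (use that assms in auto)
    show ?thesis unfolding a b using linear_diff[OF L] by simp
  qed
  have "(\<Sum>i<m. Df m y (mix (Suc i)) - Df m y (mix i)) = Df m y (mix m) - Df m y (mix 0)"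
    by (rule sum_lessThan_telescope)
  moreover have "mix m = ws" "mix 0 = us" using assms by (auto simp: mix_def)
  ultimately show ?thesis using step by simp
qed

definition tower_bound :: "nat \<Rightarrow> real" where
  "tower_bound k = \<bar>SOME M. \<forall>x vs. length vs = k \<longrightarrow> norm (Df k x vs) \<le> M * (\<Prod>v\<leftarrow>vs. norm v)\<bar>"

lemma tower_bound_nonneg: "0 \<le> tower_bound k"
  by (simp add: tower_bound_def)

lemma norm_tower_le: "length vs = k \<Longrightarrow> norm (Df k x vs) \<le> tower_bound k * (\<Prod>v\<leftarrow>vs. norm v)"
proof -
  assume len: "length vs = k"
  let ?P = "\<lambda>M. \<forall>x vs. length vs = k \<longrightarrow> norm (Df k x vs) \<le> M * (\<Prod>v\<leftarrow>vs. norm v)"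
  have "?P (SOME M. ?P M)" using someI_ex[OF tower_bounded] .
  then have "norm (Df k x vs) \<le> (SOME M. ?P M) * (\<Prod>v\<leftarrow>vs. norm v)" using len by blast
  also have "\<dots> \<le> tower_bound k * (\<Prod>v\<leftarrow>vs. norm v)"
    unfolding tower_bound_def by (intro mult_right_mono) (auto intro!: prod_list_nonneg)
  finally show ?thesis .
qed

lemma tendsto_tower_zero_slot:
  assumes "\<forall>j<i. (V j \<longlongrightarrow> v0 j) F" and "(E \<longlongrightarrow> 0) F" and "i + Suc (length R) = m"
  shows "((\<lambda>s. Df m (g s) (map (\<lambda>j. V j s) [0..<i] @ E s # R)) \<longlongrightarrow> 0) F"
proof (rule Lim_null_comparison)
  show "eventually (\<lambda>s. norm (Df m (g s) (map (\<lambda>j. V j s) [0..<i] @ E s # R))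
     \<le> tower_bound m * ((\<Prod>j<i. norm (V j s)) * (norm (E s) * (\<Prod>v\<leftarrow>R. norm v)))) F"
    using norm_tower_le[of "map (\<lambda>j. V j s) [0..<i] @ E s # R" m for s] assms(3)
    by (intro always_eventually) (auto simp: prod_list_map_upt[symmetric] o_def)
  have "((\<lambda>s. tower_bound m * ((\<Prod>j<i. norm (V j s)) * (norm (E s) * (\<Prod>v\<leftarrow>R. norm v))))
        \<longlongrightarrow> tower_bound m * ((\<Prod>j<i. norm (v0 j)) * (norm (0::'a) * (\<Prod>v\<leftarrow>R. norm v)))) F"
    using assms(1,2) by (intro tendsto_intros tendsto_prod) auto
  then show "((\<lambda>s. tower_bound m * ((\<Prod>j<i. norm (V j s)) * (norm (E s) * (\<Prod>v\<leftarrow>R. norm v))))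
      \<longlongrightarrow> 0) F"
    by simp
qed

lemma tendsto_tower:
  assumes g: "(g \<longlongrightarrow> y0) F" and V: "\<forall>j<i. (V j \<longlongrightarrow> v0 j) F" and len: "i + length R = m"
  shows "((\<lambda>s. Df m (g s) (map (\<lambda>j. V j s) [0..<i] @ R)) \<longlongrightarrow> Df m y0 (map v0 [0..<i] @ R)) F"
  using V len
proof (induction i arbitrary: R)
  case 0
  have "isCont (\<lambda>y. Df m y R) y0"
    using tower_deriv[of R m y0] 0 has_derivative_continuous by auto
  then show ?case using isCont_tendsto_compose[OF _ g] by simp
next
  case (Suc i)
  have L: "linear (\<lambda>v. Df m y (map (\<lambda>j. V j s) [0..<i] @ v # R))" for y s
    by (rule tower_linear_slot) (use Suc.prems in auto)
  have split: "Df m (g s) (map (\<lambda>j. V j s) [0..<Suc i] @ R) =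
      Df m (g s) (map (\<lambda>j. V j s) [0..<i] @ v0 i # R) +
      Df m (g s) (map (\<lambda>j. V j s) [0..<i] @ (V i s - v0 i) # R)" for s
    using linear_add[OF L, of "g s" s "v0 i" "V i s - v0 i"] by simp
  have A: "((\<lambda>s. Df m (g s) (map (\<lambda>j. V j s) [0..<i] @ v0 i # R)) \<longlongrightarrow>
      Df m y0 (map v0 [0..<i] @ v0 i # R)) F"
    using Suc.IH[of "v0 i # R"] Suc.prems by auto
  have B: "((\<lambda>s. Df m (g s) (map (\<lambda>j. V j s) [0..<i] @ (V i s - v0 i) # R)) \<longlongrightarrow> 0) F"
    using Suc.prems by (intro tendsto_tower_zero_slot[of _ V v0]) (auto intro: tendsto_eq_intros)
  show ?case unfolding split using tendsto_add[OF A B] by simp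
qed

(* Derivative of an evaluation whose slot i carries the increment W s - W t: only the
   derivative of that slot survives at s = t. *)
lemma has_vector_derivative_tower_increment:
  assumes g: "(g has_vector_derivative g') (at t within S)"
    and V: "\<forall>j<i. (V j has_vector_derivative V' j) (at t within S)"
    and W: "(W has_vector_derivative W') (at t within S)"
    and len: "i + Suc (length R) = m"
  shows "((\<lambda>s. Df m (g s) (map (\<lambda>j. V j s) [0..<i] @ (W s - W t) # R)) has_vector_derivative
          Df m (g t) (map (\<lambda>j. V j t) [0..<i] @ W' # R)) (at t within S)"
proof -
  have L: "linear (\<lambda>v. Df m y (map (\<lambda>j. V j s) [0..<i] @ v # R))" for y s
    by (rule tower_linear_slot) (use len in auto)
  have gl: "(g \<longlongrightarrow> g t) (at t within S)"
    using has_vector_derivative_continuous[OF g] continuous_within by blast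
  have Vl: "\<forall>j<i. (V j \<longlongrightarrow> V j t) (at t within S)"
    using V has_vector_derivative_continuous continuous_within by blast
  define Q where "Q s = (1 / (s - t)) *\<^sub>R (W s - W t)" for s
  have Ql: "(Q \<longlongrightarrow> W') (at t within S)"
    using W unfolding has_vector_derivative_iff_quotient Q_def[abs_def] .
  have quotient: "(1 / (s - t)) *\<^sub>R (Df m (g s) (map (\<lambda>j. V j s) [0..<i] @ (W s - W t) # R) -
            Df m (g t) (map (\<lambda>j. V j t) [0..<i] @ (W t - W t) # R)) =
      Df m (g s) (map (\<lambda>j. V j s) [0..<i] @ W' # R) +
      Df m (g s) (map (\<lambda>j. V j s) [0..<i] @ (Q s - W') # R)" for s
  proof -
    have "Df m (g t) (map (\<lambda>j. V j t) [0..<i] @ (W t - W t) # R) = 0"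
      using linear_0[OF L] by simp
    moreover have "(1 / (s - t)) *\<^sub>R Df m (g s) (map (\<lambda>j. V j s) [0..<i] @ (W s - W t) # R) =
        Df m (g s) (map (\<lambda>j. V j s) [0..<i] @ Q s # R)"
      using linear_scale[OF L, symmetric] Q_def by simp
    moreover have "Df m (g s) (map (\<lambda>j. V j s) [0..<i] @ Q s # R) =
        Df m (g s) (map (\<lambda>j. V j s) [0..<i] @ W' # R) +
        Df m (g s) (map (\<lambda>j. V j s) [0..<i] @ (Q s - W') # R)"
      using linear_add[OF L, of "g s" s W' "Q s - W'"] by simp
    ultimately show ?thesis by simp
  qed
  have A: "((\<lambda>s. Df m (g s) (map (\<lambda>j. V j s) [0..<i] @ W' # R)) \<longlongrightarrow>
      Df m (g t) (map (\<lambda>j. V j t) [0..<i] @ W' # R)) (at t within S)"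
    using tendsto_tower[OF gl, of i V "\<lambda>j. V j t" "W' # R" m] Vl len by simp
  have B: "((\<lambda>s. Df m (g s) (map (\<lambda>j. V j s) [0..<i] @ (Q s - W') # R)) \<longlongrightarrow> 0)
      (at t within S)"
    using Ql Vl len
    by (intro tendsto_tower_zero_slot[of _ V "\<lambda>j. V j t"]) (auto intro: tendsto_eq_intros simp: LIM_zero_iff)
  show ?thesis
    unfolding has_vector_derivative_iff_quotient quotient using tendsto_add[OF A B] by simp
qed

lemma has_vector_derivative_tower:
  assumes g: "(g has_vector_derivative g') (at t within S)"
    and V: "\<forall>j<i. (V j has_vector_derivative V' j) (at t within S)"
    and len: "i + length R = m"
  shows "((\<lambda>s. Df m (g s) (map (\<lambda>j. V j s) [0..<i] @ R)) has_vector_derivative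
     (Df (Suc m) (g t) (g' # map (\<lambda>j. V j t) [0..<i] @ R) +
      (\<Sum>k<i. Df m (g t) (map (\<lambda>j. if j = k then V' k else V j t) [0..<i] @ R)))) (at t within S)"
  using V len
proof (induction i arbitrary: R)
  case 0
  have D: "((\<lambda>y. Df m y R) has_derivative (\<lambda>w. Df (Suc m) (g t) (w # R))) (at (g t))"
    using tower_deriv 0 by simp
  have g0: "(g has_derivative (\<lambda>x. x *\<^sub>R g')) (at t within S)"
    using g has_vector_derivative_def by blast
  have "((\<lambda>s. Df m (g s) R) has_derivative (\<lambda>x. Df (Suc m) (g t) ((x *\<^sub>R g') # R)))
      (at t within S)"
    using has_derivative_compose[OF g0 D] by simp
  moreover have "linear (\<lambda>v. Df (Suc m) (g t) ([] @ v # R))"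
    by (rule tower_linear_slot) (use 0 in auto)
  then have "(\<lambda>x. Df (Suc m) (g t) ((x *\<^sub>R g') # R)) = (\<lambda>x. x *\<^sub>R Df (Suc m) (g t) (g' # R))"
    using linear_scale by fastforce
  ultimately show ?case by (simp add: has_vector_derivative_def)
next
  case (Suc i)
  have L: "linear (\<lambda>v. Df m y (map (\<lambda>j. V j s) [0..<i] @ v # R))" for y s
    by (rule tower_linear_slot) (use Suc.prems in auto)
  have split: "Df m (g s) (map (\<lambda>j. V j s) [0..<Suc i] @ R) =
      Df m (g s) (map (\<lambda>j. V j s) [0..<i] @ V i t # R) +
      Df m (g s) (map (\<lambda>j. V j s) [0..<i] @ (V i s - V i t) # R)" for s
    using linear_add[OF L, of "g s" s "V i t" "V i s - V i t"] by simp
  have frozen: "((\<lambda>s. Df m (g s) (map (\<lambda>j. V j s) [0..<i] @ V i t # R)) has_vector_derivative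
     (Df (Suc m) (g t) (g' # map (\<lambda>j. V j t) [0..<i] @ V i t # R) +
      (\<Sum>k<i. Df m (g t) (map (\<lambda>j. if j = k then V' k else V j t) [0..<i] @ V i t # R))))
     (at t within S)"
    using Suc.IH[of "V i t # R"] Suc.prems by auto
  have increment: "((\<lambda>s. Df m (g s) (map (\<lambda>j. V j s) [0..<i] @ (V i s - V i t) # R))
      has_vector_derivative Df m (g t) (map (\<lambda>j. V j t) [0..<i] @ V' i # R)) (at t within S)"
    using Suc.prems by (intro has_vector_derivative_tower_increment[OF g, of _ V V']) auto
  have old_slots: "(\<Sum>k<i. Df m (g t) (map (\<lambda>j. if j = k then V' k else V j t) [0..<i] @ V i t # R))
      = (\<Sum>k<i. Df m (g t) (map (\<lambda>j. if j = k then V' k else V j t) [0..<Suc i] @ R))"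
    by (intro sum.cong) auto
  have new_slot: "map (\<lambda>j. V j t) [0..<i] @ V' i # R
      = map (\<lambda>j. if j = i then V' i else V j t) [0..<Suc i] @ R"
    by auto
  have all_slots: "(\<Sum>k<Suc i. Df m (g t) (map (\<lambda>j. if j = k then V' k else V j t) [0..<Suc i] @ R))
      = (\<Sum>k<i. Df m (g t) (map (\<lambda>j. if j = k then V' k else V j t) [0..<Suc i] @ R)) +
        Df m (g t) (map (\<lambda>j. V j t) [0..<i] @ V' i # R)"
    unfolding sum.lessThan_Suc new_slot ..
  have "map (\<lambda>j. V j t) [0..<i] @ V i t # R = map (\<lambda>j. V j t) [0..<Suc i] @ R" by simp
  then show ?case
    unfolding split all_slots
    using has_vector_derivative_add[OF frozen increment] unfolding old_slots add.assoc by simp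
qed

(* The Faa di Bruno sum of order k at base point y, with G a standing for g^(a)(t). *)
definition fdb_sum :: "nat \<Rightarrow> 'a \<Rightarrow> (nat \<Rightarrow> 'a) \<Rightarrow> 'a" where
  "fdb_sum k y G = (\<Sum>as\<leftarrow>fdb_index k. Df (length as) y (map G as))"

lemma has_vector_derivative_fdb_term:
  assumes smooth: "smooth_curve_on g S" and t: "t \<in> S"
  shows "((\<lambda>s. Df (length as) (g s) (map (\<lambda>a. hvd a g S s) as)) has_vector_derivative
     (\<Sum>b\<leftarrow>fdb_step as. Df (length b) (g t) (map (\<lambda>a. hvd a g S t) b))) (at t within S)"
proof -
  define m where "m = length as"
  have hvd_deriv: "(hvd j g S has_vector_derivative hvd (Suc j) g S t) (at t within S)" for j
    using smooth t unfolding smooth_curve_on_def by blast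
  have g: "(g has_vector_derivative hvd 1 g S t) (at t within S)" using hvd_deriv[of 0] by simp
  have V: "\<forall>j<m. ((\<lambda>s. hvd (as ! j) g S s) has_vector_derivative hvd (Suc (as ! j)) g S t)
      (at t within S)"
    using hvd_deriv by blast
  have slots: "map (\<lambda>j. hvd (as ! j) g S s) [0..<m] = map (\<lambda>a. hvd a g S s) as" for s
    unfolding m_def by (rule nth_equalityI) auto
  note D = has_vector_derivative_tower[OF g V, of "[]" m, simplified, unfolded slots]
  have chain_term: "Df (Suc m) (g t) (hvd 1 g S t # map (\<lambda>a. hvd a g S t) as) =
      Df (length (1 # as)) (g t) (map (\<lambda>a. hvd a g S t) (1 # as))"
    using m_def by simp
  have product_terms:
    "(\<Sum>k<m. Df m (g t) (map (\<lambda>j. if j = k then hvd (Suc (as ! k)) g S t else hvd (as ! j) g S t) [0..<m]))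
     = (\<Sum>i\<leftarrow>[0..<m]. Df (length (as[i := Suc (as ! i)])) (g t)
          (map (\<lambda>a. hvd a g S t) (as[i := Suc (as ! i)])))"
    unfolding interv_sum_list_conv_sum_set_nat set_upt atLeast0LessThan
  proof (intro sum.cong refl)
    fix k assume "k \<in> {..<m}"
    then have "map (\<lambda>j. if j = k then hvd (Suc (as ! k)) g S t else hvd (as ! j) g S t) [0..<m]
       = map (\<lambda>a. hvd a g S t) (as[k := Suc (as ! k)])"
      unfolding m_def by (intro nth_equalityI) (auto simp: nth_list_update)
    then show "Df m (g t) (map (\<lambda>j. if j = k then hvd (Suc (as ! k)) g S t else hvd (as ! j) g S t) [0..<m])
       = Df (length (as[k := Suc (as ! k)])) (g t) (map (\<lambda>a. hvd a g S t) (as[k := Suc (as ! k)]))"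
      using m_def by simp
  qed
  have "(\<Sum>b\<leftarrow>fdb_step as. Df (length b) (g t) (map (\<lambda>a. hvd a g S t) b)) =
     Df (length (1 # as)) (g t) (map (\<lambda>a. hvd a g S t) (1 # as)) +
     (\<Sum>i\<leftarrow>[0..<m]. Df (length (as[i := Suc (as ! i)])) (g t)
        (map (\<lambda>a. hvd a g S t) (as[i := Suc (as ! i)])))"
    unfolding fdb_step_def m_def by (simp add: o_def)
  then show ?thesis using D chain_term product_terms m_def by simp
qed

lemma faa_di_bruno:
  assumes smooth: "smooth_curve_on g {a..b}" and ab: "a < b"
  shows "\<forall>t\<in>{a..b}. hvd k (\<lambda>t. Df 0 (g t) []) {a..b} t = fdb_sum k (g t) (\<lambda>i. hvd i g {a..b} t)"
proof (induction k)
  case 0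
  then show ?case by (simp add: fdb_sum_def)
next
  case (Suc k)
  show ?case
  proof
    fix t assume t: "t \<in> {a..b}"
    have D: "((\<lambda>s. fdb_sum k (g s) (\<lambda>i. hvd i g {a..b} s)) has_vector_derivative
       (\<Sum>as\<leftarrow>fdb_index k. \<Sum>bs\<leftarrow>fdb_step as. Df (length bs) (g t) (map (\<lambda>i. hvd i g {a..b} t) bs)))
       (at t within {a..b})"
      unfolding fdb_sum_def
      by (rule has_vector_derivative_sum_list) (rule has_vector_derivative_fdb_term[OF smooth t])
    have next_order: "(\<Sum>as\<leftarrow>fdb_index k. \<Sum>bs\<leftarrow>fdb_step as. Df (length bs) (g t) (map (\<lambda>i. hvd i g {a..b} t) bs))
        = fdb_sum (Suc k) (g t) (\<lambda>i. hvd i g {a..b} t)"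
      by (simp add: fdb_sum_def map_concat sum_list_concat o_def)
    have "(hvd k (\<lambda>t. Df 0 (g t) []) {a..b} has_vector_derivative
        fdb_sum (Suc k) (g t) (\<lambda>i. hvd i g {a..b} t)) (at t within {a..b})"
      using has_vector_derivative_transform[OF t _ D] Suc next_order by auto
    then show "hvd (Suc k) (\<lambda>t. Df 0 (g t) []) {a..b} t = fdb_sum (Suc k) (g t) (\<lambda>i. hvd i g {a..b} t)"
      using vector_derivative_within_closed_interval[OF ab t] by simp
  qed
qed

lemma norm_tower_single_slot_le:
  assumes l: "\<forall>v\<in>set l. norm v \<le> L" and r: "\<forall>v\<in>set r. norm v \<le> L" and d: "norm d \<le> L * e"
    and len: "length l + Suc (length r) = m" and L: "0 \<le> L" and e: "0 \<le> e"
  shows "norm (Df m y (l @ d # r)) \<le> tower_bound m * L ^ m * e"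
proof -
  have "norm (Df m y (l @ d # r)) \<le> tower_bound m * (\<Prod>v\<leftarrow>l @ d # r. norm v)"
    by (rule norm_tower_le) (use len in simp)
  also have "(\<Prod>v\<leftarrow>l @ d # r. norm v) = (\<Prod>v\<leftarrow>l. norm v) * (norm d * (\<Prod>v\<leftarrow>r. norm v))"
    by simp
  also have "\<dots> \<le> L ^ length l * ((L * e) * L ^ length r)"
    using prod_list_norm_le_power[OF l L] prod_list_norm_le_power[OF r L] d
    by (intro mult_mono) (auto intro!: prod_list_nonneg mult_nonneg_nonneg zero_le_power L e)
  also have "\<dots> = L ^ m * e" by (simp add: power_add algebra_simps flip: len)
  finally show ?thesis using tower_bound_nonneg[of m] by (simp add: mult_left_mono mult.assoc)
qed

lemma tower_perturbation:
  fixes Gq Gd :: "nat \<Rightarrow> 'a"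
  assumes range: "\<forall>a\<in>set as. a \<in> I"
    and bounds: "\<forall>i\<in>I. norm (Gq i) \<le> K \<and> norm (Gd i - Gq i) \<le> K * e"
    and K: "0 \<le> K" and e: "0 \<le> e" "e \<le> 1"
  shows "norm (Df (length as) y (map Gq as)) \<le> tower_bound (length as) * K ^ length as"
    and "norm (Df (length as) y (map Gd as) - Df (length as) y (map Gq as))
          \<le> tower_bound (length as) * real (length as) * (2 * K + 1) ^ length as * e"
proof -
  define m where "m = length as"
  define L where "L = 2 * K + 1"
  have L0: "0 \<le> L" using K L_def by simp
  have bound_q: "\<forall>v\<in>set (map Gq as). norm v \<le> K" using range bounds by auto
  show "norm (Df (length as) y (map Gq as)) \<le> tower_bound (length as) * K ^ length as"
    using norm_tower_le[of "map Gq as" "length as" y] prod_list_norm_le_power[OF bound_q K]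
      tower_bound_nonneg[of "length as"]
    by (simp add: order_trans mult_left_mono)
  have bound_q': "\<forall>v\<in>set (map Gq as). norm v \<le> L" using bound_q L_def K by force
  have bound_d': "\<forall>v\<in>set (map Gd as). norm v \<le> L"
  proof
    fix v assume "v \<in> set (map Gd as)"
    then obtain a where a: "a \<in> set as" "v = Gd a" by auto
    have "norm (Gd a) \<le> norm (Gq a) + norm (Gd a - Gq a)" by (rule norm_triangle_sub)
    also have "\<dots> \<le> K + K * e" using bounds range a by (auto intro: add_mono)
    also have "\<dots> \<le> L" using K e L_def mult_left_le[of e K] by simp
    finally show "norm v \<le> L" using a by simp
  qed
  have single_slot: "norm (Df m y (take i (map Gd as) @ (map Gd as ! i - map Gq as ! i)
      # drop (Suc i) (map Gq as))) \<le> tower_bound m * L ^ m * e" if i: "i < m" for i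
  proof (rule norm_tower_single_slot_le)
    show "\<forall>v\<in>set (take i (map Gd as)). norm v \<le> L" using bound_d' by (meson in_set_takeD)
    show "\<forall>v\<in>set (drop (Suc i) (map Gq as)). norm v \<le> L" using bound_q' by (meson in_set_dropD)
    have "norm (map Gd as ! i - map Gq as ! i) \<le> K * e" using bounds range i m_def by auto
    also have "\<dots> \<le> L * e" using e L_def K by (intro mult_right_mono) auto
    finally show "norm (map Gd as ! i - map Gq as ! i) \<le> L * e" .
  qed (use i m_def L0 e in auto)
  have "Df m y (map Gd as) - Df m y (map Gq as) = (\<Sum>i<m. Df m y (take i (map Gd as)
      @ (map Gd as ! i - map Gq as ! i) # drop (Suc i) (map Gq as)))"
    by (rule tower_diff_telescope) (auto simp: m_def)
  also have "norm \<dots> \<le> (\<Sum>i<m. tower_bound m * L ^ m * e)"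
    by (rule sum_norm_le) (use single_slot in auto)
  also have "\<dots> = tower_bound m * real m * L ^ m * e" by simp
  finally show "norm (Df (length as) y (map Gd as) - Df (length as) y (map Gq as))
      \<le> tower_bound (length as) * real (length as) * (2 * K + 1) ^ length as * e"
    unfolding m_def L_def .
qed

definition fdb_value_const :: "nat \<Rightarrow> real \<Rightarrow> real" where
  "fdb_value_const k K = (\<Sum>as\<leftarrow>fdb_index k. tower_bound (length as) * K ^ length as)"

definition fdb_error_const :: "nat \<Rightarrow> real \<Rightarrow> real" where
  "fdb_error_const k K =
     (\<Sum>as\<leftarrow>fdb_index k. tower_bound (length as) * real (length as) * (2 * K + 1) ^ length as)"

lemma fdb_sum_perturbation:
  fixes Gq Gd :: "nat \<Rightarrow> 'a"
  assumes bounds: "\<forall>i\<in>{1..k}. norm (Gq i) \<le> K \<and> norm (Gd i - Gq i) \<le> K * e"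
    and K: "0 \<le> K" and e: "0 \<le> e" "e \<le> 1"
  shows "norm (fdb_sum k y Gq) \<le> fdb_value_const k K"
    and "norm (fdb_sum k y Gd - fdb_sum k y Gq) \<le> fdb_error_const k K * e"
proof -
  have range: "\<forall>a\<in>set as. a \<in> {1..k}" if "as \<in> set (fdb_index k)" for as
    using fdb_index_range[OF that] by auto
  show "norm (fdb_sum k y Gq) \<le> fdb_value_const k K"
    unfolding fdb_sum_def fdb_value_const_def
    by (rule norm_sum_list_le) (use tower_perturbation(1)[OF range bounds K e] in auto)
  show "norm (fdb_sum k y Gd - fdb_sum k y Gq) \<le> fdb_error_const k K * e"
    unfolding fdb_sum_def fdb_error_const_def sum_list_subtractf[symmetric] sum_list_mult_const[symmetric]
    by (rule norm_sum_list_le) (use tower_perturbation(2)[OF range bounds K e] in auto)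
qed

(* Constants of the error propagation: error_const B k bounds the derivatives of orders
   1..k+1 and their errors relative to e, given the bound B at order 1. *)
fun error_const :: "real \<Rightarrow> nat \<Rightarrow> real" where
  "error_const B 0 = max B 0"
| "error_const B (Suc k) = max (error_const B k)
     (max (fdb_value_const k (error_const B k)) (fdb_error_const k (error_const B k)))"

lemma error_const_nonneg: "0 \<le> error_const B k"
  by (induction k) auto

lemma recurrence_error_bound:
  fixes Gq Gd :: "nat \<Rightarrow> 'a"
  assumes e: "0 \<le> e" "e \<le> 1"
    and first: "norm (Gq 1) \<le> B" "norm (Gd 1 - Gq 1) \<le> B * e"
    and rec_q: "\<And>k. Suc (Suc k) \<le> n \<Longrightarrow> Gq (Suc (Suc k)) = fdb_sum k y Gq"
    and rec_d: "\<And>k. Suc (Suc k) \<le> n \<Longrightarrow> Gd (Suc (Suc k)) = fdb_sum k y Gd"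
  shows "k < n \<Longrightarrow> \<forall>i\<in>{1..Suc k}. norm (Gq i) \<le> error_const B k \<and>
                                   norm (Gd i - Gq i) \<le> error_const B k * e"
proof (induction k)
  case 0
  have "B * e \<le> max B 0 * e" using e by (intro mult_right_mono) auto
  then show ?case using first by auto
next
  case (Suc k)
  define K where "K = error_const B k"
  define K' where "K' = error_const B (Suc k)"
  have K: "0 \<le> K" unfolding K_def by (rule error_const_nonneg)
  have K': "K' = max K (max (fdb_value_const k K) (fdb_error_const k K))"
    unfolding K_def K'_def by simp
  have old: "\<forall>i\<in>{1..Suc k}. norm (Gq i) \<le> K \<and> norm (Gd i - Gq i) \<le> K * e"
    using Suc unfolding K_def by simp
  then have "\<forall>i\<in>{1..k}. norm (Gq i) \<le> K \<and> norm (Gd i - Gq i) \<le> K * e" by auto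
  note new = fdb_sum_perturbation[OF this K e, of y]
  have K_le: "K \<le> K'" "K * e \<le> K' * e" using e K' by (auto intro: mult_right_mono)
  have new_value: "norm (Gq (Suc (Suc k))) \<le> K'"
    using new(1) rec_q[of k] Suc.prems K' by simp
  have "fdb_error_const k K * e \<le> K' * e" using e K' by (intro mult_right_mono) auto
  then have new_error: "norm (Gd (Suc (Suc k)) - Gq (Suc (Suc k))) \<le> K' * e"
    using new(2) rec_q[of k] rec_d[of k] Suc.prems by simp
  have "norm (Gq i) \<le> K' \<and> norm (Gd i - Gq i) \<le> K' * e" if i: "i \<in> {1..Suc (Suc k)}" for i
  proof (cases "i = Suc (Suc k)")
    case False
    then have "i \<in> {1..Suc k}" using i by auto
    then show ?thesis using old K_le by force
  qed (use new_value new_error in simp)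
  then show ?case unfolding K'_def by blast
qed

lemma solution_recurrence:
  assumes smooth: "smooth_curve_on g {a..b}" and ab: "a < b"
    and ode: "\<And>t. t \<in> {a..b} \<Longrightarrow> hvd 2 g {a..b} t = Df 0 (g t) []"
    and t: "t \<in> {a..b}"
  shows "hvd (Suc (Suc k)) g {a..b} t = fdb_sum k (g t) (\<lambda>i. hvd i g {a..b} t)"
proof -
  have "hvd (Suc (Suc k)) g {a..b} t = hvd k (hvd 2 g {a..b}) {a..b} t"
    unfolding Suc_eq_plus1 add.assoc one_add_one hvd_add ..
  also have "\<dots> = hvd k (\<lambda>t. Df 0 (g t) []) {a..b} t"
    using hvd_cong_on[of "{a..b}" "hvd 2 g {a..b}" "\<lambda>t. Df 0 (g t) []" k] ode t by blast
  also have "\<dots> = fdb_sum k (g t) (\<lambda>i. hvd i g {a..b} t)"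
    using faa_di_bruno[OF smooth ab] t by blast
  finally show ?thesis .
qed

lemma collocation_recurrence:
  assumes PC: "PC_Hermite (\<lambda>x. Df 0 x []) n h q qd" and h: "0 < h"
    and \<tau>: "\<tau> \<in> {0, h}" and order: "Suc (Suc k) \<le> n"
  shows "hvd (Suc (Suc k)) qd {0..h} \<tau> = fdb_sum k (qd \<tau>) (\<lambda>i. hvd i qd {0..h} \<tau>)"
proof -
  obtain c where "\<forall>t. qd t = (\<Sum>i\<le>2 * n - 1. t ^ i *\<^sub>R c i)"
    using PC unfolding PC_Hermite_def by blast
  then have "poly_curve qd" unfolding poly_curve_def
    by (intro exI[of _ "Suc (2 * n - 1)"] exI[of _ c]) (simp add: lessThan_Suc_atMost)
  then have smooth: "smooth_curve_on qd {0..h}" using poly_curve_smooth h by blast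
  have "\<forall>\<tau>\<in>{0, h}. \<forall>j\<in>{2..n}. hvd j qd {0..h} \<tau> = hvd (j - 2) (\<lambda>t. Df 0 (qd t) []) {0..h} \<tau>"
    using PC unfolding PC_Hermite_def by blast
  moreover have "Suc (Suc k) \<in> {2..n}" using order by simp
  ultimately have "hvd (Suc (Suc k)) qd {0..h} \<tau> = hvd (Suc (Suc k) - 2) (\<lambda>t. Df 0 (qd t) []) {0..h} \<tau>"
    using \<tau> by blast
  also have "\<dots> = hvd k (\<lambda>t. Df 0 (qd t) []) {0..h} \<tau>" by simp
  also have "\<dots> = fdb_sum k (qd \<tau>) (\<lambda>i. hvd i qd {0..h} \<tau>)"
    using faa_di_bruno[OF smooth h] \<tau> h by auto
  finally show ?thesis .
qed

lemma collocation_error_at_endpoint: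
  assumes h: "0 < h" and smooth: "smooth_curve_on q {0..h}"
    and ode: "\<And>t. t \<in> {0..h} \<Longrightarrow> hvd 2 q {0..h} t = Df 0 (q t) []"
    and PC: "PC_Hermite (\<lambda>x. Df 0 x []) n h q qd"
    and \<tau>: "\<tau> \<in> {0, h}" and e: "0 \<le> e" "e \<le> 1"
    and first: "norm (hvd 1 q {0..h} \<tau>) \<le> C" "norm (hvd 1 qd {0..h} \<tau> - hvd 1 q {0..h} \<tau>) \<le> C * e"
    and j: "j \<in> {1..n}"
  shows "norm (hvd j qd {0..h} \<tau> - hvd j q {0..h} \<tau>) \<le> error_const C (n - 1) * e"
proof -
  have \<tau>h: "\<tau> \<in> {0..h}" using \<tau> h by auto
  have same_point: "qd \<tau> = q \<tau>" using PC \<tau> unfolding PC_Hermite_def by auto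
  have "hvd (Suc (Suc k)) q {0..h} \<tau> = fdb_sum k (q \<tau>) (\<lambda>i. hvd i q {0..h} \<tau>)" for k
    using solution_recurrence[OF smooth h ode \<tau>h] .
  moreover have "hvd (Suc (Suc k)) qd {0..h} \<tau> = fdb_sum k (q \<tau>) (\<lambda>i. hvd i qd {0..h} \<tau>)"
    if "Suc (Suc k) \<le> n" for k
    using collocation_recurrence[OF PC h \<tau> that] same_point by simp
  ultimately have "\<forall>i\<in>{1..Suc (n - 1)}.
      norm (hvd i qd {0..h} \<tau> - hvd i q {0..h} \<tau>) \<le> error_const C (n - 1) * e"
    using recurrence_error_bound[OF e, of "\<lambda>i. hvd i q {0..h} \<tau>" C "\<lambda>i. hvd i qd {0..h} \<tau>"
        n "q \<tau>" "n - 1"] first j by auto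
  then show ?thesis using j by auto
qed

(* The asymptotic form: the constants above do not depend on h, so O(h^p) errors in the
   first derivative at the endpoint \<sigma> h give O(h^p) errors up to order n. *)
lemma derivative_errors_at_endpoint:
  fixes q qd :: "real \<Rightarrow> real \<Rightarrow> 'a" and \<sigma> :: "real \<Rightarrow> real"
  assumes h0: "h0 > 0" and p: "p > 0"
    and q_smooth: "\<And>h. h \<in> {0<..h0} \<Longrightarrow> smooth_curve_on (q h) {0..h}"
    and q_ode: "\<And>h t. h \<in> {0<..h0} \<Longrightarrow> t \<in> {0..h} \<Longrightarrow> hvd 2 (q h) {0..h} t = Df 0 (q h t) []"
    and qd_PC: "\<And>h. h \<in> {0<..h0} \<Longrightarrow> PC_Hermite (\<lambda>x. Df 0 x []) n h (q h) (qd h)"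
    and q_dot_bdd: "\<exists>B. \<forall>h\<in>{0<..h0}. \<forall>t\<in>{0..h}. norm (hvd 1 (q h) {0..h} t) \<le> B"
    and \<sigma>: "\<And>h. \<sigma> h \<in> {0, h}"
    and first_err: "(\<lambda>h. norm (hvd 1 (qd h) {0..h} (\<sigma> h) - hvd 1 (q h) {0..h} (\<sigma> h)))
                      \<in> O[at_right 0](\<lambda>h. h powr p)"
    and j: "j \<in> {1..n}"
  shows "(\<lambda>h. norm (hvd j (qd h) {0..h} (\<sigma> h) - hvd j (q h) {0..h} (\<sigma> h)))
           \<in> O[at_right 0](\<lambda>h. h powr p)"
proof -
  obtain B where B: "\<forall>h\<in>{0<..h0}. \<forall>t\<in>{0..h}. norm (hvd 1 (q h) {0..h} t) \<le> B"
    using q_dot_bdd by blast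
  obtain c where c: "eventually (\<lambda>h. norm (norm (hvd 1 (qd h) {0..h} (\<sigma> h) - hvd 1 (q h) {0..h} (\<sigma> h)))
      \<le> c * norm (h powr p)) (at_right 0)"
    using landau_o.bigE[OF first_err] by blast
  define C where "C = max B c"
  have pointwise: "norm (hvd j (qd h) {0..h} (\<sigma> h) - hvd j (q h) {0..h} (\<sigma> h))
      \<le> error_const C (n - 1) * h powr p"
    if hh: "h \<in> {0<..h0}" and h1: "h < 1"
      and err1: "norm (norm (hvd 1 (qd h) {0..h} (\<sigma> h) - hvd 1 (q h) {0..h} (\<sigma> h)))
                   \<le> c * norm (h powr p)" for h
  proof (rule collocation_error_at_endpoint[OF _ q_smooth[OF hh] q_ode[OF hh] qd_PC[OF hh] \<sigma> _ _ _ _ j])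
    show "0 < h" using hh by simp
    show e: "0 \<le> h powr p" "h powr p \<le> 1" using hh h1 p by (auto intro: powr_le1)
    have "\<sigma> h \<in> {0..h}" using \<sigma>[of h] hh by auto
    then have "norm (hvd 1 (q h) {0..h} (\<sigma> h)) \<le> B" using B hh by blast
    then show "norm (hvd 1 (q h) {0..h} (\<sigma> h)) \<le> C" unfolding C_def by linarith
    have "c * h powr p \<le> C * h powr p" using e unfolding C_def by (intro mult_right_mono) auto
    then show "norm (hvd 1 (qd h) {0..h} (\<sigma> h) - hvd 1 (q h) {0..h} (\<sigma> h)) \<le> C * h powr p"
      using err1 by simp
  qed
  have "eventually (\<lambda>h. h \<in> {0<..h0} \<and> h < 1) (at_right 0)"
    unfolding eventually_at_right_field using h0 by (intro exI[of _ "min h0 1"]) auto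
  then have "eventually (\<lambda>h. norm (norm (hvd j (qd h) {0..h} (\<sigma> h) - hvd j (q h) {0..h} (\<sigma> h)))
      \<le> error_const C (n - 1) * norm (h powr p)) (at_right 0)"
    using c by eventually_elim (use pointwise in simp)
  then show ?thesis by (rule bigoI)
qed

end

theorem mainTheorem1:
  fixes f :: "'a::euclidean_space \<Rightarrow> 'a"
    and n :: nat and h0 :: real and p :: real
    and q qd :: "real \<Rightarrow> real \<Rightarrow> 'a"
  assumes f_smooth: "smooth_bounded_derivs f"
    and n_ge: "n \<ge> 3"
    and h0_pos: "h0 > 0"
    and p_pos: "p > 0"
    and q_smooth: "\<And>h. h \<in> {0<..h0} \<Longrightarrow> smooth_curve_on (q h) {0..h}"
    and q_ode: "\<And>h t. h \<in> {0<..h0} \<Longrightarrow> t \<in> {0..h} \<Longrightarrow> hvd 2 (q h) {0..h} t = f (q h t)"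
    and qd_PC: "\<And>h. h \<in> {0<..h0} \<Longrightarrow> PC_Hermite f n h (q h) (qd h)"
    and q_dot_bdd: "\<exists>B. \<forall>h\<in>{0<..h0}. \<forall>t\<in>{0..h}. norm (hvd 1 (q h) {0..h} t) \<le> B"
    and qd_dot_bdd: "\<exists>B. \<forall>h\<in>{0<..h0}. \<forall>\<tau>\<in>{0, h}. norm (hvd 1 (qd h) {0..h} \<tau>) \<le> B"
    and qd_dot_err0: "(\<lambda>h. norm (hvd 1 (qd h) {0..h} 0 - hvd 1 (q h) {0..h} 0))
                        \<in> O[at_right 0](\<lambda>h. h powr p)"
    and qd_dot_errh: "(\<lambda>h. norm (hvd 1 (qd h) {0..h} h - hvd 1 (q h) {0..h} h))
                        \<in> O[at_right 0](\<lambda>h. h powr p)"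
  shows "\<forall>j\<in>{3..n}.
           (\<lambda>h. norm (hvd j (qd h) {0..h} 0 - hvd j (q h) {0..h} 0)) \<in> O[at_right 0](\<lambda>h. h powr p)
         \<and> (\<lambda>h. norm (hvd j (qd h) {0..h} h - hvd j (q h) {0..h} h)) \<in> O[at_right 0](\<lambda>h. h powr p)"
proof -
  obtain Df :: "nat \<Rightarrow> 'a \<Rightarrow> 'a list \<Rightarrow> 'a" where D0: "\<forall>x. Df 0 x [] = f x"
    and D_deriv: "\<forall>k x vs. length vs = k \<longrightarrow>
            ((\<lambda>y. Df k y vs) has_derivative (\<lambda>w. Df (Suc k) x (w # vs))) (at x)"
    and D_bounded: "\<forall>k. \<exists>M. \<forall>x vs. length vs = k \<longrightarrow> norm (Df k x vs) \<le> M * (\<Prod>v\<leftarrow>vs. norm v)"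
    using f_smooth unfolding smooth_bounded_derivs_def by blast
  interpret derivative_tower Df by unfold_locales (use D_deriv D_bounded in auto)
  have q_ode': "\<And>h t. h \<in> {0<..h0} \<Longrightarrow> t \<in> {0..h} \<Longrightarrow> hvd 2 (q h) {0..h} t = Df 0 (q h t) []"
    using q_ode D0 by simp
  have "f = (\<lambda>x. Df 0 x [])" using D0 by auto
  then have qd_PC': "\<And>h. h \<in> {0<..h0} \<Longrightarrow> PC_Hermite (\<lambda>x. Df 0 x []) n h (q h) (qd h)"
    using qd_PC by simp
  note endpoint = derivative_errors_at_endpoint[OF h0_pos p_pos q_smooth q_ode' qd_PC' q_dot_bdd]
  have "(\<lambda>h. norm (hvd j (qd h) {0..h} 0 - hvd j (q h) {0..h} 0)) \<in> O[at_right 0](\<lambda>h. h powr p)"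
    if "j \<in> {1..n}" for j
    using endpoint[of "\<lambda>h. 0"] qd_dot_err0 that by simp
  moreover have "(\<lambda>h. norm (hvd j (qd h) {0..h} h - hvd j (q h) {0..h} h)) \<in> O[at_right 0](\<lambda>h. h powr p)"
    if "j \<in> {1..n}" for j
    using endpoint[of "\<lambda>h. h"] qd_dot_errh that by simp
  ultimately show ?thesis by simp
qed

end
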